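(* Let $x,y_1,\dots,y_k$ be pairwise distinct commuting indeterminates. Then, as an identity of operators on $\mathbb{V}_N$ with coefficients in the rational function field $\mathbb{C}(x,y_1,\dots,y_k)$, $$A(x)C(y_k)\cdots C(y_1)=\frac{C(y_k)\cdots C(y_1)A(x)}{(x-y_k)\cdots(x-y_1)}-\sum_{i=1}^k\frac{C(y_k)\cdots C(y_{i+1})\,C(x)\,C(y_{i-1})\cdots C(y_1)\,A(y_i)}{(x-y_i)\prod_{j\ne i}(y_i-y_j)},$$ i.e. in the $i$-th summand the factor $C(y_i)$ is replaced by $C(x)$.
   Context: Fix $N\ge2$. $V=\mathbb{C}^2$ with basis $v_0,v_1$, ${\bf P}=\mathbb{C}[t_1,\dots,t_N]$, $\mathbb{V}_N=V^{\otimes N}\otimes{\bf P}$. Matrices on $V\otimes V$ are in the ordered basis $v_0\otimes v_0,v_0\otimes v_1,v_1\otimes v_0,v_1\otimes v_1$ (columns = images); $L(x,t)=\begin{pmatrix}1&0&0&0\\0&x+t&1&0\\0&1&0&0\\0&0&0&1\end{pmatrix}$. On $V[x]\otimes\mathbb{V}_N$ (factors $0,\dots,N$) let $M(x)=L_{0N}(x,t_N)\cdots L_{01}(x,t_1)$, with $L_{0j}(x,t_j)$ acting as $L(x,t_j)$ on factors $0,j$ (factor $0$ first) and trivially elsewhere. Define operators $A(x),C(x)$ on $\mathbb{V}_N[x]$ (polynomial in $x$) by $M(x)(v_0\otimes w)=v_0\otimes A(x)w+v_1\otimes C(x)w$; $A(y),C(y)$ denote the same operators with $x$ replaced by $y$.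 *)

theory Defs
  imports Complex_Main
begin

text \<open>Basis of V = C^2: v_0 ~ False, v_1 ~ True.  A basis state of V^{(x)N} is a
  function s :: nat => bool (s j = the index of the vector in tensor factor j, j = 1..N).
  Vectors of V_N (with the polynomial variables t_j specialised to complex values)
  are functions from basis states to complex numbers; vectors of V (x) V_N
  (auxiliary factor 0 first) are functions bool => state => complex.\<close>

type_synonym state = "nat \<Rightarrow> bool"
type_synonym vec = "state \<Rightarrow> complex"
type_synonym vec0 = "bool \<Rightarrow> state \<Rightarrow> complex"

definition bidx :: "bool \<Rightarrow> bool \<Rightarrow> nat" where
  "bidx a b = 2 * (if a then 1 else 0) + (if b then 1 else 0)"

text \<open>The 4x4 matrix L(x,t) in the ordered basis v0v0, v0v1, v1v0, v1v1
  (indices 0..3); entry (r,c) is the coefficient of basis vector r in the image of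
  basis vector c.\<close>
definition Lmat :: "complex \<Rightarrow> complex \<Rightarrow> nat \<Rightarrow> nat \<Rightarrow> complex" where
  "Lmat x t r c =
     (if r = 0 \<and> c = 0 then 1
      else if r = 1 \<and> c = 1 then x + t
      else if r = 1 \<and> c = 2 then 1
      else if r = 2 \<and> c = 1 then 1
      else if r = 3 \<and> c = 3 then 1
      else 0)"

text \<open>L_{0j}(x,t): acts as L(x,t) on factors 0 and j, trivially elsewhere.\<close>
definition Lop :: "nat \<Rightarrow> complex \<Rightarrow> complex \<Rightarrow> vec0 \<Rightarrow> vec0" where
  "Lop j x tj f = (\<lambda>a' s'. \<Sum>a\<in>UNIV. \<Sum>b\<in>UNIV.
      Lmat x tj (bidx a' (s' j)) (bidx a b) * f a (s'(j := b)))"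

primrec Mop :: "complex \<Rightarrow> (nat \<Rightarrow> complex) \<Rightarrow> nat \<Rightarrow> vec0 \<Rightarrow> vec0" where
  "Mop x t 0 f = f"
| "Mop x t (Suc n) f = Lop (Suc n) x (t (Suc n)) (Mop x t n f)"

definition lift0 :: "vec \<Rightarrow> vec0" where
  "lift0 w = (\<lambda>a s. if a then 0 else w s)"

text \<open>M(x)(v_0 (x) w) = v_0 (x) A(x)w + v_1 (x) C(x)w.\<close>
definition Aop :: "nat \<Rightarrow> (nat \<Rightarrow> complex) \<Rightarrow> complex \<Rightarrow> vec \<Rightarrow> vec" where
  "Aop N t x w = (\<lambda>s. Mop x t N (lift0 w) False s)"

definition Cop :: "nat \<Rightarrow> (nat \<Rightarrow> complex) \<Rightarrow> complex \<Rightarrow> vec \<Rightarrow> vec" where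
  "Cop N t x w = (\<lambda>s. Mop x t N (lift0 w) True s)"

primrec Cprod :: "nat \<Rightarrow> (nat \<Rightarrow> complex) \<Rightarrow> (nat \<Rightarrow> complex) \<Rightarrow> nat \<Rightarrow> vec \<Rightarrow> vec" where
  "Cprod N t z 0 w = w"
| "Cprod N t z (Suc m) w = Cop N t (z (Suc m)) (Cprod N t z m w)"

end

theory Submission
  imports Defs
begin

text \<open>Peeling off the last factor L(x, t_n) of the monodromy matrix expresses A and C on n sites
  through A and C on n-1 sites; by induction on n this yields the exchange relations
  [A(x), A(y)] = 0, [C(x), C(y)] = 0, A(x) C(y) = A(y) C(x) and
  (x - y) A(x) C(y) = C(y) A(x) - C(x) A(y).  The last one moves A(x) past C(y_k); applying the
  statement for k-1 at the two points x and y_k, using that the C's commute, and recombining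
  the denominators by a partial-fraction identity gives the statement for k.\<close>

lemma Lop_eval: "Lop j x tj f a s =
  (if a then (if s j then f True s else f False (s(j:=True)))
   else (if s j then (x+tj) * f False s + f True (s(j:=False)) else f False s))"
  by (cases a; cases "s j") (simp_all add: Lop_def UNIV_bool Lmat_def bidx_def fun_upd_idem)

lemma Mop_add: "Mop x t n (\<lambda>a s. f a s + g a s) a s = Mop x t n f a s + Mop x t n g a s"
  by (induction n arbitrary: a s) (auto simp: Lop_eval algebra_simps)

lemma Mop_scale: "Mop x t n (\<lambda>a s. c * f a s) a s = c * Mop x t n f a s"
  by (induction n arbitrary: a s) (auto simp: Lop_eval algebra_simps)

lemma Mop_freeze_site:
  "n < j \<Longrightarrow> Mop x t n (\<lambda>a s'. G (s' j) a s') a s = Mop x t n (G (s j)) a s"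
  by (induction n arbitrary: a s) (auto simp: Lop_eval)

lemma Mop_update_site:
  "n < j \<Longrightarrow> Mop x t n (\<lambda>a s'. f a (s'(j:=c))) a s = Mop x t n f a (s(j:=c))"
  by (induction n arbitrary: a s) (auto simp: Lop_eval fun_upd_twist)

definition Mcol :: "nat \<Rightarrow> (nat \<Rightarrow> complex) \<Rightarrow> complex \<Rightarrow> bool \<Rightarrow> vec \<Rightarrow> vec" where
  "Mcol n t x b w s = Mop x t n (lift0 w) b s"

lemma Aop_eq_Mcol: "Aop n t x = Mcol n t x False"
  and Cop_eq_Mcol: "Cop n t x = Mcol n t x True"
  by (auto simp: fun_eq_iff Aop_def Cop_def Mcol_def)

lemma Mcol_add: "Mcol n t x b (\<lambda>s. f s + g s) s = Mcol n t x b f s + Mcol n t x b g s"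
proof -
  have "lift0 (\<lambda>s. f s + g s) = (\<lambda>a s. lift0 f a s + lift0 g a s)"
    by (auto simp: lift0_def fun_eq_iff)
  then show ?thesis by (simp add: Mcol_def Mop_add)
qed

lemma Mcol_scale: "Mcol n t x b (\<lambda>s. c * f s) s = c * Mcol n t x b f s"
proof -
  have "lift0 (\<lambda>s. c * f s) = (\<lambda>a s. c * lift0 f a s)"
    by (auto simp: lift0_def fun_eq_iff)
  then show ?thesis by (simp add: Mcol_def Mop_scale)
qed

lemma Mcol_diff: "Mcol n t x b (\<lambda>s. f s - g s) s = Mcol n t x b f s - Mcol n t x b g s"
  using Mcol_add[of n t x b f "\<lambda>s. (-1) * g s" s] Mcol_scale[of n t x b "-1" g s] by simp

lemma Mcol_divide: "Mcol n t x b (\<lambda>s. f s / c) s = Mcol n t x b f s / c"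
  using Mcol_scale[of n t x b "1/c" f s] by simp

lemma Mcol_sum:
  "finite I \<Longrightarrow> Mcol n t x b (\<lambda>s. \<Sum>i\<in>I. f i s) s = (\<Sum>i\<in>I. Mcol n t x b (f i) s)"
proof (induction I rule: finite_induct)
  case empty
  then show ?case using Mcol_scale[of n t x b 0 "\<lambda>s. 0" s] by simp
next
  case (insert a F)
  then show ?case by (simp add: Mcol_add)
qed

lemma Mcol_freeze_site:
  "n < j \<Longrightarrow> Mcol n t x b (\<lambda>s'. W (s' j) s') s = Mcol n t x b (W (s j)) s"
proof -
  assume "n < j"
  moreover have "lift0 (\<lambda>s'. W (s' j) s') = (\<lambda>a s'. (\<lambda>c. lift0 (W c)) (s' j) a s')"
    by (auto simp: lift0_def fun_eq_iff)
  ultimately show ?thesis using Mop_freeze_site[of n j x t "\<lambda>c. lift0 (W c)"] by (simp add: Mcol_def)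
qed

lemma Mcol_update_site:
  "n < j \<Longrightarrow> Mcol n t x b (\<lambda>s'. w (s'(j:=c))) s = Mcol n t x b w (s(j:=c))"
proof -
  assume "n < j"
  moreover have "lift0 (\<lambda>s'. w (s'(j:=c))) = (\<lambda>a s'. lift0 w a (s'(j:=c)))"
    by (auto simp: lift0_def fun_eq_iff)
  ultimately show ?thesis using Mop_update_site[of n j x t "lift0 w"] by (simp add: Mcol_def)
qed

lemma Mcol_Suc_A: "Mcol (Suc n) t x False v s =
  (if s (Suc n) then (x + t (Suc n)) * Mcol n t x False v s + Mcol n t x True v (s(Suc n := False))
   else Mcol n t x False v s)"
  by (simp add: Mcol_def Lop_eval)

lemma Mcol_Suc_C: "Mcol (Suc n) t x True v s =
  (if s (Suc n) then Mcol n t x True v s else Mcol n t x False v (s(Suc n := True)))"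
  by (simp add: Mcol_def Lop_eval)

lemma Mcol_Mcol_Suc_A: "Mcol n t x b (Mcol (Suc n) t y False w) s =
  (if s (Suc n) then (y + t (Suc n)) * Mcol n t x b (Mcol n t y False w) s
     + Mcol n t x b (Mcol n t y True w) (s(Suc n := False))
   else Mcol n t x b (Mcol n t y False w) s)"
proof -
  define W where "W = (\<lambda>c. if c then (\<lambda>s'. (y + t (Suc n)) * Mcol n t y False w s'
     + Mcol n t y True w (s'(Suc n := False))) else Mcol n t y False w)"
  have "Mcol (Suc n) t y False w = (\<lambda>s'. W (s' (Suc n)) s')"
    by (auto simp: fun_eq_iff W_def Mcol_Suc_A)
  then have "Mcol n t x b (Mcol (Suc n) t y False w) s = Mcol n t x b (W (s (Suc n))) s"
    using Mcol_freeze_site[of n "Suc n" t x b W s] by simp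
  then show ?thesis by (simp add: W_def Mcol_add Mcol_scale Mcol_update_site)
qed

lemma Mcol_Mcol_Suc_C: "Mcol n t x b (Mcol (Suc n) t y True w) s =
  (if s (Suc n) then Mcol n t x b (Mcol n t y True w) s
   else Mcol n t x b (Mcol n t y False w) (s(Suc n := True)))"
proof -
  define W where "W = (\<lambda>c. if c then Mcol n t y True w
     else (\<lambda>s'. Mcol n t y False w (s'(Suc n := True))))"
  have "Mcol (Suc n) t y True w = (\<lambda>s'. W (s' (Suc n)) s')"
    by (auto simp: fun_eq_iff W_def Mcol_Suc_C)
  then have "Mcol n t x b (Mcol (Suc n) t y True w) s = Mcol n t x b (W (s (Suc n))) s"
    using Mcol_freeze_site[of n "Suc n" t x b W s] by simp
  then show ?thesis by (simp add: W_def Mcol_update_site)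
qed

definition exchange_relations :: "nat \<Rightarrow> (nat \<Rightarrow> complex) \<Rightarrow> bool" where
  "exchange_relations n t \<longleftrightarrow> (\<forall>x y w s.
     Mcol n t x False (Mcol n t y False w) s = Mcol n t y False (Mcol n t x False w) s \<and>
     Mcol n t x True (Mcol n t y True w) s = Mcol n t y True (Mcol n t x True w) s \<and>
     Mcol n t x False (Mcol n t y True w) s = Mcol n t y False (Mcol n t x True w) s \<and>
     Mcol n t y True (Mcol n t x False w) s =
       (x - y) * Mcol n t x False (Mcol n t y True w) s + Mcol n t x True (Mcol n t y False w) s)"

lemma exchange_relations_0: "exchange_relations 0 t"
  by (simp add: exchange_relations_def Mcol_def lift0_def)

lemma exchange_relations_Suc:
  assumes "exchange_relations n t"
  shows "exchange_relations (Suc n) t"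
  unfolding exchange_relations_def
proof (intro allI, goal_cases)
  case (1 x y w s)
  have AA: "\<And>s. Mcol n t x False (Mcol n t y False w) s = Mcol n t y False (Mcol n t x False w) s"
    and CC: "\<And>s. Mcol n t x True (Mcol n t y True w) s = Mcol n t y True (Mcol n t x True w) s"
    and AC: "\<And>s. Mcol n t x False (Mcol n t y True w) s = Mcol n t y False (Mcol n t x True w) s"
    and CA: "\<And>s. Mcol n t y True (Mcol n t x False w) s =
       (x - y) * Mcol n t x False (Mcol n t y True w) s + Mcol n t x True (Mcol n t y False w) s"
    using assms unfolding exchange_relations_def by blast+
  show ?case
    by (cases "s (Suc n)")
      (simp_all add: Mcol_Suc_A Mcol_Suc_C Mcol_Mcol_Suc_A Mcol_Mcol_Suc_C fun_upd_idem
        AA CC AC CA algebra_simps)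
qed

lemma exchange_relations: "exchange_relations n t"
  by (induction n) (simp_all add: exchange_relations_0 exchange_relations_Suc)

lemma Cop_commute: "Cop n t a (Cop n t b w) = Cop n t b (Cop n t a w)"
  using exchange_relations[of n t] by (auto simp: fun_eq_iff Cop_eq_Mcol exchange_relations_def)

lemma Aop_Cop: "x \<noteq> y \<Longrightarrow> Aop n t x (Cop n t y w) s =
   (Cop n t y (Aop n t x w) s - Cop n t x (Aop n t y w) s) / (x - y)"
  using exchange_relations[of n t]
  by (simp add: exchange_relations_def Aop_eq_Mcol Cop_eq_Mcol field_simps)

lemma Cop_lincomb: "finite I \<Longrightarrow>
  Cop n t x (\<lambda>s. f s / c - (\<Sum>i\<in>I. g i s / d i)) s
    = Cop n t x f s / c - (\<Sum>i\<in>I. Cop n t x (g i) s / d i)"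
  by (simp add: Cop_eq_Mcol Mcol_diff Mcol_divide Mcol_sum)

lemma Cprod_cong:
  "(\<And>i. 1 \<le> i \<Longrightarrow> i \<le> m \<Longrightarrow> z i = z' i) \<Longrightarrow> Cprod N t z m v = Cprod N t z' m v"
  by (induction m) auto

lemma Cop_Cprod_swap: "1 \<le> i \<Longrightarrow> i \<le> k \<Longrightarrow>
   Cop N t a (Cprod N t (z(i:=b)) k v) = Cop N t b (Cprod N t (z(i:=a)) k v)"
proof (induction k)
  case 0
  then show ?case by simp
next
  case (Suc m)
  show ?case
  proof (cases "i = Suc m")
    case True
    then have "Cprod N t (z(i:=c)) m v = Cprod N t z m v" for c
      by (auto intro: Cprod_cong)
    then have "Cprod N t (z(i:=c)) (Suc m) v = Cop N t c (Cprod N t z m v)" for c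
      using True by simp
    then show ?thesis using Cop_commute by metis
  next
    case False
    with Suc.prems have "Cop N t a (Cprod N t (z(i:=b)) m v) = Cop N t b (Cprod N t (z(i:=a)) m v)"
      by (intro Suc.IH) auto
    moreover have "Cprod N t (z(i:=c)) (Suc m) v = Cop N t (z (Suc m)) (Cprod N t (z(i:=c)) m v)" for c
      using False by simp
    ultimately show ?thesis using Cop_commute by metis
  qed
qed

text \<open>The scalar identity behind the induction step: the partial fractions for the nodes
  y_1..y_k at x and at y_(k+1), combined by the exchange relation, give those for y_1..y_(k+1).\<close>
lemma partial_fraction_step:
  fixes x :: "'a::field" and y :: "nat \<Rightarrow> 'a"
  assumes inj: "inj_on y {1..Suc k}" and x: "x \<notin> y ` {1..Suc k}"
  defines "E \<equiv> \<lambda>m i. \<Prod>j\<in>{1..m} - {i}. y i - y j"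
  shows "((Q0 / (\<Prod>j=1..k. x - y j) - (\<Sum>i=1..k. Q i / ((x - y i) * E k i)))
         - (Q (Suc k) / (\<Prod>j=1..k. y (Suc k) - y j)
            - (\<Sum>i=1..k. Q i / ((y (Suc k) - y i) * E k i)))) / (x - y (Suc k))
       = Q0 / (\<Prod>j=1..Suc k. x - y j) - (\<Sum>i=1..Suc k. Q i / ((x - y i) * E (Suc k) i))"
proof -
  let ?y' = "y (Suc k)"
  have ne_x: "x - y i \<noteq> 0" if "i \<in> {1..Suc k}" for i
    using x that by auto
  have ne_y: "y i - y j \<noteq> 0" if "i \<in> {1..Suc k}" "j \<in> {1..Suc k}" "i \<noteq> j" for i j
    using inj_onD[OF inj] that by auto
  have E_ne: "E k i \<noteq> 0" if "i \<in> {1..k}" for i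
    using that ne_y by (auto simp: E_def)
  have E_Suc: "E (Suc k) i = (y i - ?y') * E k i" if "i \<in> {1..k}" for i
  proof -
    have "{1..Suc k} - {i} = insert (Suc k) ({1..k} - {i})" using that by auto
    then show ?thesis using that by (simp add: E_def)
  qed
  have E_last: "E (Suc k) (Suc k) = (\<Prod>j=1..k. ?y' - y j)"
  proof -
    have "{1..Suc k} - {Suc k} = {1..k}" by auto
    then show ?thesis by (simp add: E_def)
  qed
  let ?S1 = "\<Sum>i=1..k. Q i / ((x - y i) * E k i)"
  let ?S2 = "\<Sum>i=1..k. Q i / ((?y' - y i) * E k i)"
  let ?S3 = "\<Sum>i=1..k. Q i / ((x - y i) * E (Suc k) i)"
  have sums: "?S1 - ?S2 = (x - ?y') * ?S3"
    unfolding sum_subtractf[symmetric] sum_distrib_left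
  proof (rule sum.cong)
    fix i assume i: "i \<in> {1..k}"
    then have "x - y i \<noteq> 0" "y i - ?y' \<noteq> 0" "E k i \<noteq> 0"
      using ne_x ne_y E_ne by auto
    then show "Q i / ((x - y i) * E k i) - Q i / ((?y' - y i) * E k i)
        = (x - ?y') * (Q i / ((x - y i) * E (Suc k) i))"
      using i by (simp add: E_Suc divide_simps) (simp add: algebra_simps)
  qed simp
  have ivl: "{1..Suc k} = insert (Suc k) {1..k}" by auto
  have frac: "(q0 / D - q / P - d * S) / d = q0 / (D * d) - (S + q / (d * P))"
    if "d \<noteq> 0" "D \<noteq> 0" "P \<noteq> 0" for q0 q d D P S :: 'a
    using that by (simp add: field_simps)
  have ne: "x - ?y' \<noteq> 0" "(\<Prod>j=1..k. x - y j) \<noteq> 0" "(\<Prod>j=1..k. ?y' - y j) \<noteq> 0"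
    using ne_x ne_y by auto
  have "((Q0 / (\<Prod>j=1..k. x - y j) - ?S1) - (Q (Suc k) / (\<Prod>j=1..k. ?y' - y j) - ?S2)) / (x - ?y')
      = (Q0 / (\<Prod>j=1..k. x - y j) - Q (Suc k) / (\<Prod>j=1..k. ?y' - y j) - (?S1 - ?S2)) / (x - ?y')"
    by (simp add: algebra_simps)
  also have "\<dots> = Q0 / ((\<Prod>j=1..k. x - y j) * (x - ?y'))
      - (?S3 + Q (Suc k) / ((x - ?y') * (\<Prod>j=1..k. ?y' - y j)))"
    unfolding sums by (rule frac[OF ne])
  also have "\<dots> = Q0 / (\<Prod>j=1..Suc k. x - y j) - (\<Sum>i=1..Suc k. Q i / ((x - y i) * E (Suc k) i))"
    by (simp add: ivl E_last ac_simps)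
  finally show ?thesis .
qed

lemma Aop_Cprod:
  assumes "inj_on y {1..k}" and "x \<notin> y ` {1..k}"
  shows "Aop N t x (Cprod N t y k w) s =
           Cprod N t y k (Aop N t x w) s / (\<Prod>j=1..k. x - y j)
         - (\<Sum>i=1..k. Cprod N t (y(i := x)) k (Aop N t (y i) w) s
              / ((x - y i) * (\<Prod>j\<in>{1..k} - {i}. y i - y j)))"
  using assms
proof (induction k arbitrary: x s)
  case 0
  then show ?case by simp
next
  case (Suc k)
  let ?y' = "y (Suc k)"
  let ?E = "\<lambda>i. \<Prod>j\<in>{1..k} - {i}. y i - y j"
  define Q where "Q i = Cprod N t (y(i := x)) (Suc k) (Aop N t (y i) w) s" for i
  have inj: "inj_on y {1..k}"
    using Suc.prems(1) by (rule inj_on_subset) auto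
  have x: "x \<notin> y ` {1..k}" and xy': "x \<noteq> ?y'"
    using Suc.prems(2) by auto
  have y': "?y' \<notin> y ` {1..k}"
    using Suc.prems(1) by (auto dest: inj_onD)
  have IH_x: "Aop N t x (Cprod N t y k w) = (\<lambda>s. Cprod N t y k (Aop N t x w) s / (\<Prod>j=1..k. x - y j)
      - (\<Sum>i=1..k. Cprod N t (y(i := x)) k (Aop N t (y i) w) s / ((x - y i) * ?E i)))"
    by (intro ext Suc.IH[OF inj x])
  have IH_y': "Aop N t ?y' (Cprod N t y k w) = (\<lambda>s. Cprod N t y k (Aop N t ?y' w) s / (\<Prod>j=1..k. ?y' - y j)
      - (\<Sum>i=1..k. Cprod N t (y(i := ?y')) k (Aop N t (y i) w) s / ((?y' - y i) * ?E i)))"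
    by (intro ext Suc.IH[OF inj y'])
  have C_y'_A_x: "Cop N t ?y' (Aop N t x (Cprod N t y k w)) s
      = Cprod N t y (Suc k) (Aop N t x w) s / (\<Prod>j=1..k. x - y j)
        - (\<Sum>i=1..k. Q i / ((x - y i) * ?E i))"
    unfolding IH_x Cop_lincomb[OF finite_atLeastAtMost] Q_def by simp
  have C_x_A_y': "Cop N t x (Aop N t ?y' (Cprod N t y k w)) s
      = Q (Suc k) / (\<Prod>j=1..k. ?y' - y j) - (\<Sum>i=1..k. Q i / ((?y' - y i) * ?E i))"
  proof -
    have "Cprod N t (y(Suc k := x)) k v = Cprod N t y k v" for v
      by (rule Cprod_cong) auto
    moreover have "Cop N t x (Cprod N t (y(i := ?y')) k v) = Cprod N t (y(i := x)) (Suc k) v"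
      if "i \<in> {1..k}" for i v
      using that Cop_Cprod_swap[of i k N t x y ?y' v] by simp
    ultimately show ?thesis
      unfolding IH_y' Cop_lincomb[OF finite_atLeastAtMost] Q_def by simp
  qed
  have "Aop N t x (Cprod N t y (Suc k) w) s
      = (Cop N t ?y' (Aop N t x (Cprod N t y k w)) s - Cop N t x (Aop N t ?y' (Cprod N t y k w)) s)
        / (x - ?y')"
    using Aop_Cop[OF xy'] by simp
  also have "\<dots> = Cprod N t y (Suc k) (Aop N t x w) s / (\<Prod>j=1..Suc k. x - y j)
      - (\<Sum>i=1..Suc k. Q i / ((x - y i) * (\<Prod>j\<in>{1..Suc k} - {i}. y i - y j)))"
    unfolding C_y'_A_x C_x_A_y' by (rule partial_fraction_step[OF Suc.prems])
  finally show ?case unfolding Q_def .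
qed

theorem lemma2p8:
  fixes N k :: nat and t y :: "nat \<Rightarrow> complex" and x :: complex
    and w :: vec and s :: state
  assumes "N \<ge> 2"
    and "inj_on y {1..k}"
    and "x \<notin> y ` {1..k}"
  shows "Aop N t x (Cprod N t y k w) s =
           Cprod N t y k (Aop N t x w) s / (\<Prod>j=1..k. x - y j)
         - (\<Sum>i=1..k. Cprod N t (y(i := x)) k (Aop N t (y i) w) s
              / ((x - y i) * (\<Prod>j\<in>{1..k} - {i}. y i - y j)))"
  using Aop_Cprod[OF assms(2,3)] .

end
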